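(* Let $(\mathcal{X},c)$ be a metric space with diameter at most $1$, let $\mu,\nu,\nu'$ be probability distributions on $\mathcal{X}$, and let $p\ge1$, $k\ge 0$, $\delta\in(0,1)$. Let $\tilde\nu=(1-\delta)\nu+\delta\nu'$. Then $$\mathrm{RPW}_{p,k}(\mu,\nu)-\delta\le\mathrm{RPW}_{p,k}(\mu,\tilde\nu)\le(1-\delta)\,\mathrm{RPW}_{p,k}(\mu,\nu)+\delta.$$
   Context: $(\mathcal{X},c)$ is a metric space with $c(x,y)\le 1$ for all $x,y$; distributions are Borel probability measures. For $p\in[1,\infty)$ and $\alpha\in[0,1]$, a partial transport plan of mass $\alpha$ between $\mu$ and $\nu$ is a nonnegative measure $\gamma$ on $\mathcal{X}\times\mathcal{X}$ of total mass $\alpha$ with first marginal $\le\mu$ and second marginal $\le\nu$ (setwise); its cost is $w_p(\gamma)=(\int c^p\,d\gamma)^{1/p}$. $W_{p,\alpha}(\mu,\nu)$ is the infimum of $w_p(\gamma)$ over such $\gamma$. For $k\ge0$, $\mathrm{RPW}_{p,k}(\mu,\nu)=\inf\{\varepsilon\in[0,1]: W_{p,1-\varepsilon}(\mu,\nu)\le k\varepsilon\}$. *)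

theory Defs
  imports "HOL-Probability.Probability"
begin

text \<open>The cost function c is the metric dist of the type 'a.\<close>

definition partial_plan :: "real \<Rightarrow> 'a::metric_space measure \<Rightarrow> 'a measure \<Rightarrow> ('a \<times> 'a) measure \<Rightarrow> bool" where
  "partial_plan \<alpha> \<mu> \<nu> \<gamma> \<longleftrightarrow>
     sets \<gamma> = sets (borel :: ('a \<times> 'a) measure) \<and>
     emeasure \<gamma> (space \<gamma>) = ennreal \<alpha> \<and>
     (\<forall>A \<in> sets (borel :: 'a measure). emeasure \<gamma> (A \<times> UNIV) \<le> emeasure \<mu> A) \<and>
     (\<forall>A \<in> sets (borel :: 'a measure). emeasure \<gamma> (UNIV \<times> A) \<le> emeasure \<nu> A)"

definition plan_cost :: "real \<Rightarrow> ('a::metric_space \<times> 'a) measure \<Rightarrow> real" where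
  "plan_cost p \<gamma> = (enn2real (\<integral>\<^sup>+ z. ennreal ((dist (fst z) (snd z)) powr p) \<partial>\<gamma>)) powr (1 / p)"

text \<open>Partial Wasserstein cost W_{p,alpha}; infimum over an empty set is top.\<close>
definition partial_W :: "real \<Rightarrow> real \<Rightarrow> 'a::metric_space measure \<Rightarrow> 'a measure \<Rightarrow> ennreal" where
  "partial_W p \<alpha> \<mu> \<nu> = (INF \<gamma> \<in> {\<gamma>. partial_plan \<alpha> \<mu> \<nu> \<gamma>}. ennreal (plan_cost p \<gamma>))"

definition RPW :: "real \<Rightarrow> real \<Rightarrow> 'a::metric_space measure \<Rightarrow> 'a measure \<Rightarrow> real" where
  "RPW p k \<mu> \<nu> = Inf {\<epsilon> \<in> {0..1}. partial_W p (1 - \<epsilon>) \<mu> \<nu> \<le> ennreal (k * \<epsilon>)}"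

end

theory Submission
  imports Defs
begin

text \<open>Each bound turns a partial plan for one target measure into a partial plan for the
  other that is dominated by it as a measure; since \<open>dist \<le> 1\<close> the cost integrand is
  bounded, so the cost does not increase. Upper bound: a plan for \<open>\<nu>\<close> of mass \<open>1 - \<epsilon>\<close>,
  scaled by \<open>1 - \<delta>\<close>, is a plan for \<open>\<nu>t\<close> of mass \<open>1 - ((1 - \<delta>) \<epsilon> + \<delta>)\<close>. Lower bound:
  a plan for \<open>\<nu>t\<close> of mass \<open>1 - \<epsilon>\<close> is reweighted at its target point by the
  Radon-Nikodym density \<open>w \<le> 1\<close> of \<open>(1 - \<delta>) \<nu>\<close> with respect to \<open>\<nu>t\<close>; its second
  marginal then lies below \<open>\<nu>\<close>, it loses at most the mass \<open>\<integral> (1 - w) d\<nu>t = \<delta>\<close>, and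
  scaling it down gives a plan for \<open>\<nu>\<close> of mass exactly \<open>1 - \<epsilon> - \<delta>\<close>.\<close>

lemma measurable_snd_borel:
  "snd \<in> borel_measurable (borel :: ('a::topological_space \<times> 'b::topological_space) measure)"
  using borel_measurable_continuous_onI[OF continuous_on_snd[OF continuous_on_id]] by simp

lemma nn_integral_snd_le:
  fixes \<gamma> :: "('a::topological_space \<times> 'b::topological_space) measure"
  assumes sets_\<gamma>: "sets \<gamma> = sets borel" and sets_\<nu>: "sets \<nu> = sets borel"
    and marginal: "\<And>A. A \<in> sets borel \<Longrightarrow> emeasure \<gamma> (UNIV \<times> A) \<le> emeasure \<nu> A"
    and f: "f \<in> borel_measurable borel"
  shows "(\<integral>\<^sup>+ z. f (snd z) \<partial>\<gamma>) \<le> (\<integral>\<^sup>+ y. f y \<partial>\<nu>)"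
proof -
  have snd_meas: "snd \<in> measurable \<gamma> borel"
    using measurable_snd_borel by (simp add: measurable_cong_sets[OF sets_\<gamma> refl])
  have "distr \<gamma> borel snd \<le> \<nu>"
  proof (subst le_measure)
    show "\<forall>A\<in>sets (distr \<gamma> borel snd). emeasure (distr \<gamma> borel snd) A \<le> emeasure \<nu> A"
    proof
      fix A :: "'b set" assume "A \<in> sets (distr \<gamma> borel snd)"
      then have A: "A \<in> sets borel" by simp
      have "snd -` A \<inter> space \<gamma> = UNIV \<times> A"
        using sets_eq_imp_space_eq[OF sets_\<gamma>] by auto
      then show "emeasure (distr \<gamma> borel snd) A \<le> emeasure \<nu> A"
        using emeasure_distr[OF snd_meas A] marginal[OF A] by simp
    qed
  qed (simp add: sets_\<nu>)
  then have "(\<integral>\<^sup>+ y. f y \<partial>distr \<gamma> borel snd) \<le> (\<integral>\<^sup>+ y. f y \<partial>\<nu>)"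
    by (intro nn_integral_mono_measure) (simp_all add: sets_\<nu>)
  then show ?thesis
    using nn_integral_distr[OF snd_meas, of f] f by simp
qed

lemma density_le_self:
  assumes f: "f \<in> borel_measurable M" and le_1: "\<And>x. f x \<le> 1"
  shows "density M f \<le> M"
proof (subst le_measure)
  show "\<forall>X\<in>sets (density M f). emeasure (density M f) X \<le> emeasure M X"
  proof
    fix X assume "X \<in> sets (density M f)"
    then have X: "X \<in> sets M" by simp
    have "emeasure (density M f) X = (\<integral>\<^sup>+ x. f x * indicator X x \<partial>M)"
      by (rule emeasure_density[OF f X])
    also have "\<dots> \<le> (\<integral>\<^sup>+ x. indicator X x \<partial>M)"
      using le_1 by (intro nn_integral_mono) (simp add: indicator_def)
    finally show "emeasure (density M f) X \<le> emeasure M X" using X by simp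
  qed
qed simp

lemma AE_le_one_of_density_le:
  assumes M: "finite_measure M" and h: "h \<in> borel_measurable M"
    and le: "\<And>A. A \<in> sets M \<Longrightarrow> emeasure (density M h) A \<le> emeasure M A"
  shows "AE x in M. h x \<le> 1"
proof -
  interpret M: finite_measure M by (rule M)
  define B where "B = {x \<in> space M. 1 < h x}"
  have B: "B \<in> sets M" unfolding B_def using h by measurable
  have "emeasure M B = 0"
  proof (rule ccontr)
    assume "emeasure M B \<noteq> 0"
    then have not_AE: "\<not> (AE x in M. x \<notin> B)"
      using AE_iff_null_sets[OF B] by (auto dest: null_setsD1)
    have "(\<integral>\<^sup>+ x. indicator B x \<partial>M) < (\<integral>\<^sup>+ x. h x * indicator B x \<partial>M)"
    proof (rule nn_integral_less)
      show "indicator B \<in> borel_measurable M" using B by (rule borel_measurable_indicator)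
      show "(\<lambda>x. h x * indicator B x) \<in> borel_measurable M"
        using h borel_measurable_indicator[OF B] by (rule borel_measurable_times_ennreal)
      show "(\<integral>\<^sup>+ x. indicator B x \<partial>M) \<noteq> \<infinity>" using B by simp
      show "AE x in M. indicator B x \<le> h x * indicator B x"
        by (intro AE_I2) (simp add: B_def indicator_def less_imp_le)
      show "\<not> (AE x in M. h x * indicator B x \<le> indicator B x)"
      proof
        assume "AE x in M. h x * indicator B x \<le> indicator B x"
        then have "AE x in M. x \<notin> B"
          by eventually_elim (auto simp: B_def indicator_def)
        with not_AE show False by simp
      qed
    qed
    also have "\<dots> = emeasure (density M h) B"
      using emeasure_density[OF h B] by (simp add: mult.commute)
    also have "\<dots> \<le> emeasure M B" by (rule le[OF B])
    finally show False using B by simp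
  qed
  then have "AE x in M. x \<notin> B"
    using B by (intro AE_not_in null_setsI)
  moreover have "AE x in M. x \<notin> B \<longrightarrow> h x \<le> 1"
    by (intro AE_I2) (simp add: B_def not_less)
  ultimately show ?thesis by (rule AE_mp)
qed

lemma exists_density_le_one:
  assumes M: "finite_measure M" and sets_N: "sets N = sets M"
    and le: "\<And>A. A \<in> sets M \<Longrightarrow> emeasure N A \<le> emeasure M A"
  obtains w where "w \<in> borel_measurable M" "\<And>x. w x \<le> 1" "density M w = N"
proof -
  interpret M: finite_measure M by (rule M)
  have "absolutely_continuous M N"
    unfolding absolutely_continuous_def
  proof
    fix A assume "A \<in> null_sets M"
    then show "A \<in> null_sets N"
      using le[of A] sets_N by (simp add: null_sets_def)
  qed
  then have density_h: "density M (RN_deriv M N) = N"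
    by (rule M.density_RN_deriv[OF _ sets_N])
  have h: "RN_deriv M N \<in> borel_measurable M" by (rule borel_measurable_RN_deriv)
  have "AE x in M. RN_deriv M N x \<le> 1"
    by (rule AE_le_one_of_density_le[OF M h]) (simp add: density_h le)
  then have "AE x in M. min (RN_deriv M N x) 1 = RN_deriv M N x"
    by eventually_elim simp
  then have "density M (\<lambda>x. min (RN_deriv M N x) 1) = N"
    using density_h h by (subst density_cong) auto
  then show thesis using h by (intro that) auto
qed
lemma scale_measure_le_self:
  assumes "c \<le> 1"
  shows "scale_measure c M \<le> M"
  using mult_right_mono[OF assms] by (subst le_measure) auto

lemma partial_plan_submeasure:
  assumes plan: "partial_plan \<alpha> \<mu> \<nu> \<gamma>"
    and sets_\<gamma>': "sets \<gamma>' = sets borel" and le: "\<gamma>' \<le> \<gamma>"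
    and mass: "emeasure \<gamma>' (space \<gamma>') = ennreal \<beta>"
    and target: "\<And>A. A \<in> sets borel \<Longrightarrow> emeasure \<gamma>' (UNIV \<times> A) \<le> emeasure \<nu>' A"
  shows "partial_plan \<beta> \<mu> \<nu>' \<gamma>'"
  unfolding partial_plan_def
proof (intro conjI ballI sets_\<gamma>' mass target)
  fix A :: "'a set" assume "A \<in> sets borel"
  then have "emeasure \<gamma>' (A \<times> UNIV) \<le> emeasure \<gamma> (A \<times> UNIV)"
    using plan sets_\<gamma>' by (intro le_measureD3[OF le]) (auto simp: partial_plan_def)
  also have "\<dots> \<le> emeasure \<mu> A"
    using plan \<open>A \<in> sets borel\<close> by (auto simp: partial_plan_def)
  finally show "emeasure \<gamma>' (A \<times> UNIV) \<le> emeasure \<mu> A" .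
qed

lemma partial_plan_mono_target:
  assumes "partial_plan \<alpha> \<mu> \<nu> \<gamma>" "\<And>A. A \<in> sets borel \<Longrightarrow> emeasure \<nu> A \<le> emeasure \<nu>' A"
  shows "partial_plan \<alpha> \<mu> \<nu>' \<gamma>"
  using assms unfolding partial_plan_def by (meson order_trans)

lemma partial_plan_scale:
  assumes plan: "partial_plan \<alpha> \<mu> \<nu> \<gamma>" and c: "0 \<le> c" "c \<le> 1"
    and target: "\<And>A. A \<in> sets borel \<Longrightarrow> ennreal c * emeasure \<nu> A \<le> emeasure \<nu>' A"
  shows "partial_plan (c * \<alpha>) \<mu> \<nu>' (scale_measure (ennreal c) \<gamma>)"
proof (rule partial_plan_submeasure[OF plan])
  show "sets (scale_measure (ennreal c) \<gamma>) = sets borel"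
    using plan by (simp add: partial_plan_def)
  show "scale_measure (ennreal c) \<gamma> \<le> \<gamma>"
    using c by (intro scale_measure_le_self) simp
  show "emeasure (scale_measure (ennreal c) \<gamma>) (space (scale_measure (ennreal c) \<gamma>)) = ennreal (c * \<alpha>)"
    using plan c by (simp add: partial_plan_def space_scale_measure ennreal_mult')
  fix A :: "'a set" assume A: "A \<in> sets borel"
  have "ennreal c * emeasure \<gamma> (UNIV \<times> A) \<le> ennreal c * emeasure \<nu> A"
    using plan A by (intro mult_left_mono) (auto simp: partial_plan_def)
  then show "emeasure (scale_measure (ennreal c) \<gamma>) (UNIV \<times> A) \<le> emeasure \<nu>' A"
    using target[OF A] by simp
qed


lemma partial_plan_less_mass:
  assumes plan: "partial_plan \<alpha> \<mu> \<nu> \<gamma>" and \<beta>: "0 \<le> \<beta>" "\<beta> \<le> \<alpha>"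
  shows "\<exists>\<gamma>'. partial_plan \<beta> \<mu> \<nu> \<gamma>' \<and> \<gamma>' \<le> \<gamma>"
proof -
  define c where "c = (if \<alpha> = 0 then 0 else \<beta> / \<alpha>)"
  have c: "0 \<le> c" "c \<le> 1" "c * \<alpha> = \<beta>"
    using \<beta> by (auto simp: c_def divide_le_eq_1)
  have "partial_plan (c * \<alpha>) \<mu> \<nu> (scale_measure (ennreal c) \<gamma>)"
    using c mult_right_mono[of "ennreal c" 1] by (intro partial_plan_scale[OF plan]) auto
  moreover have "scale_measure (ennreal c) \<gamma> \<le> \<gamma>"
    using c by (intro scale_measure_le_self) simp
  ultimately show ?thesis using c(3) by auto
qed
lemma partial_plan_reweight_target:
  fixes \<gamma> :: "('a::metric_space \<times> 'a) measure"
  assumes plan: "partial_plan \<alpha> \<mu> M \<gamma>" and sets_M: "sets M = sets borel"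
    and w [measurable]: "w \<in> borel_measurable borel" and w_le_1: "\<And>y. w y \<le> 1"
  defines "\<gamma>w \<equiv> density \<gamma> (\<lambda>z. w (snd z))"
  shows "partial_plan (enn2real (emeasure \<gamma>w (space \<gamma>w))) \<mu> (density M w) \<gamma>w"
    and "\<gamma>w \<le> \<gamma>"
    and "ennreal \<alpha> \<le> emeasure \<gamma>w (space \<gamma>w) + (\<integral>\<^sup>+ y. 1 - w y \<partial>M)"
proof -
  have sets_\<gamma>: "sets \<gamma> = sets borel" and mass_\<gamma>: "emeasure \<gamma> (space \<gamma>) = ennreal \<alpha>"
    and marginal: "\<And>A. A \<in> sets borel \<Longrightarrow> emeasure \<gamma> (UNIV \<times> A) \<le> emeasure M A"
    using plan by (auto simp: partial_plan_def)
  have w_snd [measurable]: "(\<lambda>z. w (snd z)) \<in> borel_measurable \<gamma>"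
    using measurable_comp[OF measurable_snd_borel w]
    by (simp add: measurable_cong_sets[OF sets_\<gamma> refl] o_def)
  show le: "\<gamma>w \<le> \<gamma>"
    unfolding \<gamma>w_def using w_le_1 by (intro density_le_self) simp_all
  have mass_\<gamma>w: "emeasure \<gamma>w (space \<gamma>w) = (\<integral>\<^sup>+ z. w (snd z) \<partial>\<gamma>)"
    unfolding \<gamma>w_def by (simp add: emeasure_density)
  have "ennreal \<alpha> = (\<integral>\<^sup>+ z. w (snd z) + (1 - w (snd z)) \<partial>\<gamma>)"
    using mass_\<gamma> w_le_1 by (simp add: add_diff_inverse_ennreal)
  also have "\<dots> = emeasure \<gamma>w (space \<gamma>w) + (\<integral>\<^sup>+ z. 1 - w (snd z) \<partial>\<gamma>)"
    unfolding mass_\<gamma>w by (rule nn_integral_add) measurable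
  also have "\<dots> \<le> emeasure \<gamma>w (space \<gamma>w) + (\<integral>\<^sup>+ y. 1 - w y \<partial>M)"
    by (rule add_left_mono, rule nn_integral_snd_le[OF sets_\<gamma> sets_M marginal], assumption) measurable
  finally show "ennreal \<alpha> \<le> emeasure \<gamma>w (space \<gamma>w) + (\<integral>\<^sup>+ y. 1 - w y \<partial>M)" .
  show "partial_plan (enn2real (emeasure \<gamma>w (space \<gamma>w))) \<mu> (density M w) \<gamma>w"
  proof (rule partial_plan_submeasure[OF plan _ le])
    show "sets \<gamma>w = sets borel" using sets_\<gamma> by (simp add: \<gamma>w_def)
    have "emeasure \<gamma>w (space \<gamma>w) \<le> emeasure \<gamma> (space \<gamma>)"
      using le_measureD3[OF le, of "space \<gamma>"] by (simp add: \<gamma>w_def)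
    then show "emeasure \<gamma>w (space \<gamma>w) = ennreal (enn2real (emeasure \<gamma>w (space \<gamma>w)))"
      using mass_\<gamma> by (auto simp: top_unique ennreal_enn2real_if)
  next
    fix A :: "'a set" assume A: "A \<in> sets borel"
    have "emeasure \<gamma>w (UNIV \<times> A) = (\<integral>\<^sup>+ z. w (snd z) * indicator A (snd z) \<partial>\<gamma>)"
      unfolding \<gamma>w_def using A sets_\<gamma>
      by (subst emeasure_density) (auto simp: borel_Times intro!: nn_integral_cong split: split_indicator)
    also have "\<dots> \<le> (\<integral>\<^sup>+ y. w y * indicator A y \<partial>M)"
      by (rule nn_integral_snd_le[OF sets_\<gamma> sets_M marginal], assumption) (use A in measurable)
    also have "\<dots> = emeasure (density M w) A"
      using A sets_M w by (subst emeasure_density) (auto simp: measurable_cong_sets[OF sets_M refl])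
    finally show "emeasure \<gamma>w (UNIV \<times> A) \<le> emeasure (density M w) A" .
  qed
qed

lemma partial_plan_shrink_target:
  fixes \<gamma> :: "('a::metric_space \<times> 'a) measure"
  assumes plan: "partial_plan \<alpha> \<mu> M \<gamma>"
    and M: "finite_measure M" and sets_M: "sets M = sets borel" and sets_N: "sets N = sets borel"
    and N_le_M: "\<And>A. A \<in> sets borel \<Longrightarrow> emeasure N A \<le> emeasure M A"
    and mass_gap: "emeasure M (space M) \<le> emeasure N (space N) + ennreal \<delta>"
    and \<delta>: "0 \<le> \<delta>" "\<delta> \<le> \<alpha>"
  shows "\<exists>\<gamma>'. partial_plan (\<alpha> - \<delta>) \<mu> N \<gamma>' \<and> \<gamma>' \<le> \<gamma>"
proof -
  obtain w where w_M: "w \<in> borel_measurable M" and w_le_1: "\<And>y. w y \<le> 1"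
    and density_w: "density M w = N"
    using exists_density_le_one[OF M] sets_N sets_M N_le_M by metis
  have w: "w \<in> borel_measurable borel" using w_M by (simp add: measurable_cong_sets[OF sets_M refl])
  define \<gamma>w where "\<gamma>w = density \<gamma> (\<lambda>z. w (snd z))"
  define m where "m = enn2real (emeasure \<gamma>w (space \<gamma>w))"
  note reweight = partial_plan_reweight_target[OF plan sets_M w w_le_1,
      folded \<gamma>w_def, folded m_def, unfolded density_w]
  have "emeasure N (space N) \<le> emeasure M (space M)"
    using N_le_M[of UNIV] sets_N sets_M by (simp add: sets_eq_imp_space_eq)
  then have N_finite: "emeasure N (space N) \<noteq> \<infinity>"
    using finite_measure.emeasure_finite[OF M] by (auto simp: top_unique)
  have "emeasure N (space N) + (\<integral>\<^sup>+ y. 1 - w y \<partial>M) = (\<integral>\<^sup>+ y. w y + (1 - w y) \<partial>M)"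
    unfolding density_w[symmetric] using w_M by (simp add: emeasure_density nn_integral_add)
  also have "\<dots> = emeasure M (space M)" using w_le_1 by (simp add: add_diff_inverse_ennreal)
  also have "\<dots> \<le> emeasure N (space N) + ennreal \<delta>" by (rule mass_gap)
  finally have "(\<integral>\<^sup>+ y. 1 - w y \<partial>M) \<le> ennreal \<delta>"
    using N_finite by (simp add: ennreal_add_left_cancel_le)
  with reweight(3) have "ennreal \<alpha> \<le> ennreal m + ennreal \<delta>"
    using reweight(1) unfolding partial_plan_def by (metis add_left_mono order_trans)
  then have "\<alpha> - \<delta> \<le> m"
    using \<delta> by (simp add: m_def flip: ennreal_plus)
  then obtain \<gamma>' where "partial_plan (\<alpha> - \<delta>) \<mu> N \<gamma>'" "\<gamma>' \<le> \<gamma>w"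
    using partial_plan_less_mass[OF reweight(1), of "\<alpha> - \<delta>"] \<delta> by auto
  then show ?thesis using reweight(2) by (blast intro: order_trans)
qed

lemma plan_cost_mono:
  fixes \<gamma> \<gamma>' :: "('a::metric_space \<times> 'a) measure"
  assumes diam: "\<forall>x y :: 'a. dist x y \<le> 1" and p: "p > 0"
    and sets_eq: "sets \<gamma>' = sets \<gamma>" and le: "\<gamma>' \<le> \<gamma>"
    and finite: "emeasure \<gamma> (space \<gamma>) \<noteq> \<infinity>"
  shows "plan_cost p \<gamma>' \<le> plan_cost p \<gamma>"
proof -
  let ?c = "\<lambda>z::'a \<times> 'a. ennreal (dist (fst z) (snd z) powr p)"
  have "?c z \<le> 1" for z
    using powr_mono2[of p "dist (fst z) (snd z)" 1] diam p by simp
  then have "(\<integral>\<^sup>+ z. ?c z \<partial>\<gamma>) \<le> emeasure \<gamma> (space \<gamma>)"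
    using nn_integral_mono[of \<gamma> ?c "\<lambda>_. 1"] by simp
  then have "(\<integral>\<^sup>+ z. ?c z \<partial>\<gamma>) \<noteq> \<infinity>"
    using finite by (auto simp: top_unique)
  moreover have "(\<integral>\<^sup>+ z. ?c z \<partial>\<gamma>') \<le> (\<integral>\<^sup>+ z. ?c z \<partial>\<gamma>)"
    by (rule nn_integral_mono_measure[OF sets_eq le])
  ultimately show ?thesis
    unfolding plan_cost_def using p by (intro powr_mono2 enn2real_mono) (auto simp: top.not_eq_extremum)
qed

lemma partial_W_le_of_subplans:
  fixes \<mu> \<nu> \<mu>' \<nu>' :: "'a::metric_space measure"
  assumes diam: "\<forall>x y :: 'a. dist x y \<le> 1" and p: "p > 0"
    and subplan: "\<And>\<gamma>. partial_plan \<alpha> \<mu> \<nu> \<gamma> \<Longrightarrow> \<exists>\<gamma>'. partial_plan \<beta> \<mu>' \<nu>' \<gamma>' \<and> \<gamma>' \<le> \<gamma>"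
  shows "partial_W p \<beta> \<mu>' \<nu>' \<le> partial_W p \<alpha> \<mu> \<nu>"
  unfolding partial_W_def
proof (rule INF_mono)
  fix \<gamma> assume "\<gamma> \<in> {\<gamma>. partial_plan \<alpha> \<mu> \<nu> \<gamma>}"
  then have \<gamma>: "partial_plan \<alpha> \<mu> \<nu> \<gamma>" by simp
  then obtain \<gamma>' where \<gamma>': "partial_plan \<beta> \<mu>' \<nu>' \<gamma>'" "\<gamma>' \<le> \<gamma>" using subplan by blast
  have "plan_cost p \<gamma>' \<le> plan_cost p \<gamma>"
    using \<gamma> \<gamma>' by (intro plan_cost_mono[OF diam p]) (auto simp: partial_plan_def)
  with \<gamma>' show "\<exists>\<gamma>'\<in>{\<gamma>. partial_plan \<beta> \<mu>' \<nu>' \<gamma>}. ennreal (plan_cost p \<gamma>') \<le> ennreal (plan_cost p \<gamma>)"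
    by (auto intro: ennreal_leI)
qed

lemma partial_W_zero:
  assumes "p > 0"
  shows "partial_W p 0 \<mu> \<nu> = 0"
proof -
  let ?\<gamma> = "null_measure (borel :: ('a::metric_space \<times> 'a) measure)"
  have "partial_plan 0 \<mu> \<nu> ?\<gamma>" unfolding partial_plan_def by simp
  moreover have "plan_cost p ?\<gamma> = 0" unfolding plan_cost_def using assms by simp
  ultimately have "partial_W p 0 \<mu> \<nu> \<le> 0"
    unfolding partial_W_def by (metis (mono_tags) INF_lower ennreal_0 mem_Collect_eq)
  then show ?thesis by simp
qed

lemma RPW_le:
  assumes "0 \<le> \<epsilon>" "\<epsilon> \<le> 1" "partial_W p (1 - \<epsilon>) \<mu> \<nu> \<le> ennreal (k * \<epsilon>)"
  shows "RPW p k \<mu> \<nu> \<le> \<epsilon>"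
  unfolding RPW_def using assms by (intro cInf_lower) (auto intro: bdd_belowI[of _ 0])

lemma RPW_le_one:
  assumes "p > 0" "k \<ge> 0"
  shows "RPW p k \<mu> \<nu> \<le> 1"
  using assms by (intro RPW_le) (auto simp: partial_W_zero)

lemma RPW_greatest:
  assumes "p > 0" "k \<ge> 0"
    and "\<And>\<epsilon>. 0 \<le> \<epsilon> \<Longrightarrow> \<epsilon> \<le> 1 \<Longrightarrow> partial_W p (1 - \<epsilon>) \<mu> \<nu> \<le> ennreal (k * \<epsilon>) \<Longrightarrow> b \<le> \<epsilon>"
  shows "b \<le> RPW p k \<mu> \<nu>"
proof -
  have "1 \<in> {\<epsilon> \<in> {0..1}. partial_W p (1 - \<epsilon>) \<mu> \<nu> \<le> ennreal (k * \<epsilon>)}"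
    using assms(1) by (simp add: partial_W_zero)
  then show ?thesis unfolding RPW_def using assms(3) by (intro cInf_greatest) auto
qed

lemma RPW_mixture_upper:
  fixes \<mu> \<nu> \<nu>t :: "'a::metric_space measure"
  assumes diam: "\<forall>x y :: 'a. dist x y \<le> 1" and p: "p > 0" and k: "k \<ge> 0"
    and \<delta>: "0 \<le> \<delta>" "\<delta> < 1"
    and dominated: "\<And>A. A \<in> sets borel \<Longrightarrow> ennreal (1 - \<delta>) * emeasure \<nu> A \<le> emeasure \<nu>t A"
  shows "RPW p k \<mu> \<nu>t \<le> (1 - \<delta>) * RPW p k \<mu> \<nu> + \<delta>"
proof -
  have "(RPW p k \<mu> \<nu>t - \<delta>) / (1 - \<delta>) \<le> RPW p k \<mu> \<nu>"
  proof (rule RPW_greatest[OF p k])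
    fix \<epsilon> assume \<epsilon>: "0 \<le> \<epsilon>" "\<epsilon> \<le> 1" and feasible: "partial_W p (1 - \<epsilon>) \<mu> \<nu> \<le> ennreal (k * \<epsilon>)"
    define \<epsilon>' where "\<epsilon>' = (1 - \<delta>) * \<epsilon> + \<delta>"
    have \<epsilon>': "0 \<le> \<epsilon>'" "\<epsilon>' \<le> 1" "\<epsilon> \<le> \<epsilon>'"
      using \<epsilon> \<delta> mult_left_le[of \<epsilon> "1 - \<delta>"] mult_left_le[of \<epsilon> \<delta>] unfolding \<epsilon>'_def
      by (auto simp: algebra_simps)
    have "partial_W p (1 - \<epsilon>') \<mu> \<nu>t \<le> partial_W p (1 - \<epsilon>) \<mu> \<nu>"
    proof (rule partial_W_le_of_subplans[OF diam p])
      fix \<gamma> assume "partial_plan (1 - \<epsilon>) \<mu> \<nu> \<gamma>"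
      then have "partial_plan ((1 - \<delta>) * (1 - \<epsilon>)) \<mu> \<nu>t (scale_measure (ennreal (1 - \<delta>)) \<gamma>)"
        using \<delta> dominated by (intro partial_plan_scale) auto
      moreover have "scale_measure (ennreal (1 - \<delta>)) \<gamma> \<le> \<gamma>"
        using \<delta> by (intro scale_measure_le_self) simp
      moreover have "(1 - \<delta>) * (1 - \<epsilon>) = 1 - \<epsilon>'"
        unfolding \<epsilon>'_def by (simp add: algebra_simps)
      ultimately show "\<exists>\<gamma>'. partial_plan (1 - \<epsilon>') \<mu> \<nu>t \<gamma>' \<and> \<gamma>' \<le> \<gamma>" by auto
    qed
    also have "\<dots> \<le> ennreal (k * \<epsilon>)" by (rule feasible)
    also have "\<dots> \<le> ennreal (k * \<epsilon>')"
      using k \<epsilon>'(3) by (intro ennreal_leI mult_left_mono)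
    finally have "RPW p k \<mu> \<nu>t \<le> \<epsilon>'" using \<epsilon>' by (intro RPW_le) auto
    then show "(RPW p k \<mu> \<nu>t - \<delta>) / (1 - \<delta>) \<le> \<epsilon>"
      using \<delta> unfolding \<epsilon>'_def by (simp add: pos_divide_le_eq algebra_simps)
  qed
  then show ?thesis using \<delta> by (simp add: pos_divide_le_eq algebra_simps)
qed

lemma RPW_mixture_lower:
  fixes \<mu> \<nu> \<nu>t :: "'a::metric_space measure"
  assumes diam: "\<forall>x y :: 'a. dist x y \<le> 1" and p: "p > 0" and k: "k \<ge> 0"
    and \<nu>: "prob_space \<nu>" "sets \<nu> = sets borel"
    and \<nu>t: "prob_space \<nu>t" "sets \<nu>t = sets borel"
    and \<delta>: "0 \<le> \<delta>" "\<delta> \<le> 1"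
    and dominated: "\<And>A. A \<in> sets borel \<Longrightarrow> ennreal (1 - \<delta>) * emeasure \<nu> A \<le> emeasure \<nu>t A"
  shows "RPW p k \<mu> \<nu> - \<delta> \<le> RPW p k \<mu> \<nu>t"
proof (rule RPW_greatest[OF p k])
  fix \<epsilon> assume \<epsilon>: "0 \<le> \<epsilon>" "\<epsilon> \<le> 1" and feasible: "partial_W p (1 - \<epsilon>) \<mu> \<nu>t \<le> ennreal (k * \<epsilon>)"
  show "RPW p k \<mu> \<nu> - \<delta> \<le> \<epsilon>"
  proof (cases "\<epsilon> + \<delta> \<le> 1")
    case False
    then show ?thesis using RPW_le_one[OF p k, of \<mu> \<nu>] by simp
  next
    case True
    let ?N = "scale_measure (ennreal (1 - \<delta>)) \<nu>"
    have "partial_W p (1 - (\<epsilon> + \<delta>)) \<mu> \<nu> \<le> partial_W p (1 - \<epsilon>) \<mu> \<nu>t"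
    proof (rule partial_W_le_of_subplans[OF diam p])
      fix \<gamma> assume plan: "partial_plan (1 - \<epsilon>) \<mu> \<nu>t \<gamma>"
      have "emeasure \<nu>t (space \<nu>t) \<le> emeasure ?N (space ?N) + ennreal \<delta>"
        using \<delta> prob_space.emeasure_space_1[OF \<nu>(1)] prob_space.emeasure_space_1[OF \<nu>t(1)]
        by (simp add: space_scale_measure flip: ennreal_plus)
      then obtain \<gamma>' where "partial_plan (1 - \<epsilon> - \<delta>) \<mu> ?N \<gamma>'" "\<gamma>' \<le> \<gamma>"
        using partial_plan_shrink_target[OF plan _ \<nu>t(2), of ?N \<delta>] \<nu>t(1) \<nu>(2) dominated \<delta> True
        by (auto simp: prob_space_def)
      moreover have "emeasure ?N A \<le> emeasure \<nu> A" for A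
        using mult_right_mono[of "ennreal (1 - \<delta>)" 1 "emeasure \<nu> A"] \<delta> by simp
      ultimately show "\<exists>\<gamma>'. partial_plan (1 - (\<epsilon> + \<delta>)) \<mu> \<nu> \<gamma>' \<and> \<gamma>' \<le> \<gamma>"
        by (metis diff_diff_eq emeasure_scale_measure partial_plan_mono_target)
    qed
    also have "\<dots> \<le> ennreal (k * \<epsilon>)" by (rule feasible)
    also have "\<dots> \<le> ennreal (k * (\<epsilon> + \<delta>))"
      using k \<delta> by (intro ennreal_leI mult_left_mono) auto
    finally have "RPW p k \<mu> \<nu> \<le> \<epsilon> + \<delta>" using \<epsilon> \<delta> True by (intro RPW_le) auto
    then show ?thesis by simp
  qed
qed

theorem theorem3p1:
  fixes \<mu> \<nu> \<nu>' \<nu>t :: "'a::metric_space measure"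
    and p k \<delta> :: real
  assumes diam: "\<forall>x y :: 'a. dist x y \<le> 1"
    and mu: "prob_space \<mu>" "sets \<mu> = sets (borel :: 'a measure)"
    and nu: "prob_space \<nu>" "sets \<nu> = sets (borel :: 'a measure)"
    and nu': "prob_space \<nu>'" "sets \<nu>' = sets (borel :: 'a measure)"
    and p: "p \<ge> 1" and k: "k \<ge> 0" and delta: "0 < \<delta>" "\<delta> < 1"
    and nut_sets: "sets \<nu>t = sets (borel :: 'a measure)"
    and nut: "\<forall>A \<in> sets (borel :: 'a measure).
               emeasure \<nu>t A = ennreal (1 - \<delta>) * emeasure \<nu> A + ennreal \<delta> * emeasure \<nu>' A"
  shows "RPW p k \<mu> \<nu> - \<delta> \<le> RPW p k \<mu> \<nu>t
         \<and> RPW p k \<mu> \<nu>t \<le> (1 - \<delta>) * RPW p k \<mu> \<nu> + \<delta>"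
proof -
  have p_pos: "p > 0" using p by simp
  have dominated: "ennreal (1 - \<delta>) * emeasure \<nu> A \<le> emeasure \<nu>t A" if "A \<in> sets borel" for A
    using nut that by (simp add: le_iff_add)
  have "emeasure \<nu>t (space \<nu>t) = 1"
    using nut[rule_format, of UNIV] delta prob_space.emeasure_space_1[OF nu(1)]
      prob_space.emeasure_space_1[OF nu'(1)] nu(2) nu'(2) nut_sets
    by (simp add: sets_eq_imp_space_eq flip: ennreal_plus)
  then have "prob_space \<nu>t" by (rule prob_spaceI)
  then show ?thesis
    using RPW_mixture_lower[OF diam p_pos k nu _ nut_sets, of \<delta>] RPW_mixture_upper[OF diam p_pos k, of \<delta>]
      delta dominated by auto
qed

end
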